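(* Suppose $\mathop{\downarrow}$ satisfies invariance, monotonicity, full existence and stationarity. Then for all closed tuples $a,b$ and closed sets $C$ with $C\subseteq a\cap b$, if $a\mathop{\downarrow}_C b$ then $a\mathop{\downarrow}^d_C b$ (and hence $a\mathop{\downarrow}^a_C b$).
   Context: $\mathbb M$ monster model; closed = algebraically closed; $\equiv_C$ = conjugacy under automorphisms fixing $C$ pointwise. Invariance: $A\mathop{\downarrow}_C B$, $\sigma\in\operatorname{Aut}(\mathbb M)$ imply $\sigma(A)\mathop{\downarrow}_{\sigma(C)}\sigma(B)$. Monotonicity: $A\mathop{\downarrow}_C B$, $A_0\subseteq A$, $B_0\subseteq B$ imply $A_0\mathop{\downarrow}_C B_0$. Full existence: for closed $C$, any $B$ and tuple $a$, some $a'\equiv_C a$ has $a'\mathop{\downarrow}_C B$. Stationarity: for closed $C$ and closed tuples $a,a',b$ with $C\subseteq a\cap b$, $a\mathop{\downarrow}_C b$, $a'\mathop{\downarrow}_C b$, $a'\equiv_C a$ imply $ab\equiv_C a'b$. $a\mathop{\downarrow}^d_C b$ iff for every $C$-indiscernible $(b_i)_{i<\omega}$ with $b_0=b$ there is $a'$ with $a'b_i\equiv_C ab$ for all $i$. $A\mathop{\downarrow}^a_C B$ iff $\operatorname{acl}(AC)\cap\operatorname{acl}(BC)=\operatorname{acl}(C)$. *)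

theory Defs
  imports Main
begin

text \<open>
Abstract rendering of the monster-model setting.
  \<^item> 'm is the universe of the monster model M;
  \<^item> Aut is its automorphism group (a set of permutations of 'm);
  \<^item> acl is the algebraic closure operator;
  \<^item> small singles out the small subsets (all parameter sets are small).
Tuples are functions from an index type into 'm; the set of entries of a tuple a
is range a. An independence relation ind is given on sets: ind A C B means
A independent from B over C.
\<close>

definition fixes_pw :: "('m \<Rightarrow> 'm) \<Rightarrow> 'm set \<Rightarrow> bool" where
  "fixes_pw \<sigma> C \<longleftrightarrow> (\<forall>c\<in>C. \<sigma> c = c)"

definition conj :: "('m \<Rightarrow> 'm) set \<Rightarrow> 'm set \<Rightarrow> ('i \<Rightarrow> 'm) \<Rightarrow> ('i \<Rightarrow> 'm) \<Rightarrow> bool" where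
  "conj Aut C a a' \<longleftrightarrow> (\<exists>\<sigma>\<in>Aut. fixes_pw \<sigma> C \<and> \<sigma> \<circ> a = a')"

definition tup :: "('i \<Rightarrow> 'm) \<Rightarrow> ('j \<Rightarrow> 'm) \<Rightarrow> ('i + 'j \<Rightarrow> 'm)" where
  "tup a b = case_sum a b"

definition closed :: "('m set \<Rightarrow> 'm set) \<Rightarrow> 'm set \<Rightarrow> bool" where
  "closed acl A \<longleftrightarrow> acl A = A"

definition closed_tuple :: "('m set \<Rightarrow> 'm set) \<Rightarrow> ('i \<Rightarrow> 'm) \<Rightarrow> bool" where
  "closed_tuple acl a \<longleftrightarrow> closed acl (range a)"

definition monster_setting ::
  "('m \<Rightarrow> 'm) set \<Rightarrow> ('m set \<Rightarrow> 'm set) \<Rightarrow> ('m set \<Rightarrow> bool) \<Rightarrow> bool" where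
  "monster_setting Aut acl small \<longleftrightarrow>
     (\<forall>\<sigma>\<in>Aut. bij \<sigma>) \<and> id \<in> Aut \<and>
     (\<forall>\<sigma>\<in>Aut. \<forall>\<tau>\<in>Aut. \<sigma> \<circ> \<tau> \<in> Aut) \<and> (\<forall>\<sigma>\<in>Aut. inv \<sigma> \<in> Aut) \<and>
     (\<forall>A. A \<subseteq> acl A) \<and> (\<forall>A B. A \<subseteq> B \<longrightarrow> acl A \<subseteq> acl B) \<and> (\<forall>A. acl (acl A) = acl A) \<and>
     (\<forall>\<sigma>\<in>Aut. \<forall>A. acl (\<sigma> ` A) = \<sigma> ` acl A) \<and>
     (\<forall>A B. small B \<longrightarrow> A \<subseteq> B \<longrightarrow> small A) \<and>
     (\<forall>\<sigma>\<in>Aut. \<forall>A. small A \<longrightarrow> small (\<sigma> ` A)) \<and>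
     (\<forall>A. small A \<longrightarrow> small (acl A)) \<and>
     (\<forall>F :: nat \<Rightarrow> 'm set. (\<forall>n. small (F n)) \<longrightarrow> small (\<Union>n. F n))"

definition invariance :: "('m \<Rightarrow> 'm) set \<Rightarrow> ('m set \<Rightarrow> 'm set \<Rightarrow> 'm set \<Rightarrow> bool) \<Rightarrow> bool" where
  "invariance Aut ind \<longleftrightarrow>
     (\<forall>\<sigma>\<in>Aut. \<forall>A B C. ind A C B \<longrightarrow> ind (\<sigma> ` A) (\<sigma> ` C) (\<sigma> ` B))"

definition monotonicity :: "('m set \<Rightarrow> 'm set \<Rightarrow> 'm set \<Rightarrow> bool) \<Rightarrow> bool" where
  "monotonicity ind \<longleftrightarrow>
     (\<forall>A B C A0 B0. ind A C B \<longrightarrow> A0 \<subseteq> A \<longrightarrow> B0 \<subseteq> B \<longrightarrow> ind A0 C B0)"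

definition full_existence ::
  "('m \<Rightarrow> 'm) set \<Rightarrow> ('m set \<Rightarrow> 'm set) \<Rightarrow> ('m set \<Rightarrow> bool)
   \<Rightarrow> ('m set \<Rightarrow> 'm set \<Rightarrow> 'm set \<Rightarrow> bool) \<Rightarrow> 'i itself \<Rightarrow> bool" where
  "full_existence Aut acl small ind (_ :: 'i itself) \<longleftrightarrow>
     (\<forall>C B (a :: 'i \<Rightarrow> 'm). small C \<longrightarrow> closed acl C \<longrightarrow> small B \<longrightarrow> small (range a) \<longrightarrow>
        (\<exists>a'. conj Aut C a a' \<and> ind (range a') C B))"

definition stationarity ::
  "('m \<Rightarrow> 'm) set \<Rightarrow> ('m set \<Rightarrow> 'm set) \<Rightarrow> ('m set \<Rightarrow> bool)
   \<Rightarrow> ('m set \<Rightarrow> 'm set \<Rightarrow> 'm set \<Rightarrow> bool) \<Rightarrow> 'i itself \<Rightarrow> 'j itself \<Rightarrow> bool" where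
  "stationarity Aut acl small ind (_ :: 'i itself) (_ :: 'j itself) \<longleftrightarrow>
     (\<forall>C (a :: 'i \<Rightarrow> 'm) a' (b :: 'j \<Rightarrow> 'm).
        small C \<longrightarrow> closed acl C \<longrightarrow>
        small (range a) \<longrightarrow> small (range a') \<longrightarrow> small (range b) \<longrightarrow>
        closed_tuple acl a \<longrightarrow> closed_tuple acl a' \<longrightarrow> closed_tuple acl b \<longrightarrow>
        C \<subseteq> range a \<inter> range b \<longrightarrow>
        ind (range a) C (range b) \<longrightarrow> ind (range a') C (range b) \<longrightarrow> conj Aut C a' a \<longrightarrow>
        conj Aut C (tup a b) (tup a' b))"

definition indiscernible :: "('m \<Rightarrow> 'm) set \<Rightarrow> 'm set \<Rightarrow> (nat \<Rightarrow> 'j \<Rightarrow> 'm) \<Rightarrow> bool" where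
  "indiscernible Aut C bs \<longleftrightarrow>
     (\<forall>n (i :: nat \<Rightarrow> nat) (j :: nat \<Rightarrow> nat).
        strict_mono_on {..<n} i \<longrightarrow> strict_mono_on {..<n} j \<longrightarrow>
        (\<exists>\<sigma>\<in>Aut. fixes_pw \<sigma> C \<and> (\<forall>k<n. \<sigma> \<circ> bs (i k) = bs (j k))))"

definition dind :: "('m \<Rightarrow> 'm) set \<Rightarrow> 'm set \<Rightarrow> ('i \<Rightarrow> 'm) \<Rightarrow> ('j \<Rightarrow> 'm) \<Rightarrow> bool" where
  "dind Aut C a b \<longleftrightarrow>
     (\<forall>bs :: nat \<Rightarrow> 'j \<Rightarrow> 'm. indiscernible Aut C bs \<longrightarrow> bs 0 = b \<longrightarrow>
        (\<exists>a' :: 'i \<Rightarrow> 'm. \<forall>i. conj Aut C (tup a' (bs i)) (tup a b)))"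

definition aind :: "('m set \<Rightarrow> 'm set) \<Rightarrow> 'm set \<Rightarrow> 'm set \<Rightarrow> 'm set \<Rightarrow> bool" where
  "aind acl A C B \<longleftrightarrow> acl (A \<union> C) \<inter> acl (B \<union> C) = acl C"

end

theory Submission
  imports Defs
begin

text \<open>
Let \<open>(b\<^sub>i)\<close> be a \<open>C\<close>-indiscernible sequence with \<open>b\<^sub>0 = b\<close>. By full existence there is
\<open>a' \<equiv>\<^sub>C a\<close> independent over \<open>C\<close> from all the \<open>b\<^sub>i\<close> at once, hence from each single \<open>b\<^sub>i\<close>.
Every \<open>b\<^sub>i\<close> is conjugate to \<open>b\<close> over \<open>C\<close>; transporting the pair \<open>a' b\<^sub>i\<close> along such a
conjugacy gives a \<open>C\<close>-conjugate of \<open>a\<close> that is independent from \<open>b\<close>, so stationarity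
yields \<open>a' b\<^sub>i \<equiv>\<^sub>C a b\<close> for every \<open>i\<close>.
\<close>

lemma
  assumes "monster_setting Aut acl small"
  shows monster_setting_bij: "\<sigma> \<in> Aut \<Longrightarrow> bij \<sigma>"
    and monster_setting_comp: "\<sigma> \<in> Aut \<Longrightarrow> \<tau> \<in> Aut \<Longrightarrow> \<sigma> \<circ> \<tau> \<in> Aut"
    and monster_setting_inv: "\<sigma> \<in> Aut \<Longrightarrow> inv \<sigma> \<in> Aut"
    and monster_setting_acl_image: "\<sigma> \<in> Aut \<Longrightarrow> acl (\<sigma> ` A) = \<sigma> ` acl A"
    and monster_setting_small_image: "\<sigma> \<in> Aut \<Longrightarrow> small A \<Longrightarrow> small (\<sigma> ` A)"
    and monster_setting_small_UN: "(\<And>n. small (F n)) \<Longrightarrow> small (\<Union>n::nat. F n)"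
  using assms by (simp_all add: monster_setting_def)

lemma fixes_pw_inv:
  assumes "bij \<sigma>" and "fixes_pw \<sigma> C"
  shows "fixes_pw (inv \<sigma>) C"
  unfolding fixes_pw_def
proof
  fix c
  assume "c \<in> C"
  with assms(2) have "\<sigma> c = c"
    unfolding fixes_pw_def by blast
  with assms(1) show "inv \<sigma> c = c"
    by (metis bij_is_inj inv_f_f)
qed

lemma fixes_pw_image_eq:
  assumes "fixes_pw \<sigma> C"
  shows "\<sigma> ` C = C"
  using assms unfolding fixes_pw_def by simp

lemma conj_sym:
  assumes "monster_setting Aut acl small" and "conj Aut C x y"
  shows "conj Aut C y x"
proof -
  obtain \<sigma> where \<sigma>: "\<sigma> \<in> Aut" "fixes_pw \<sigma> C" "\<sigma> \<circ> x = y"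
    using assms(2) unfolding conj_def by blast
  have "bij \<sigma>"
    using monster_setting_bij[OF assms(1) \<sigma>(1)] .
  have "inv \<sigma> \<circ> y = (inv \<sigma> \<circ> \<sigma>) \<circ> x"
    using \<sigma>(3) by (simp add: comp_assoc)
  also have "\<dots> = x"
    using \<open>bij \<sigma>\<close> by (simp add: bij_is_inj)
  finally show ?thesis
    using monster_setting_inv[OF assms(1) \<sigma>(1)] fixes_pw_inv[OF \<open>bij \<sigma>\<close> \<sigma>(2)]
    unfolding conj_def by blast
qed

lemma conj_trans:
  assumes "monster_setting Aut acl small" and "conj Aut C x y" and "conj Aut C y z"
  shows "conj Aut C x z"
proof -
  obtain \<sigma> \<tau> where "\<sigma> \<in> Aut" "fixes_pw \<sigma> C" "\<sigma> \<circ> x = y"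
    and "\<tau> \<in> Aut" "fixes_pw \<tau> C" "\<tau> \<circ> y = z"
    using assms(2,3) unfolding conj_def by blast
  then have "\<tau> \<circ> \<sigma> \<in> Aut" "fixes_pw (\<tau> \<circ> \<sigma>) C" "(\<tau> \<circ> \<sigma>) \<circ> x = z"
    using monster_setting_comp[OF assms(1)] by (auto simp: fixes_pw_def comp_assoc)
  then show ?thesis
    unfolding conj_def by blast
qed

lemma comp_tup: "\<sigma> \<circ> tup x y = tup (\<sigma> \<circ> x) (\<sigma> \<circ> y)"
  by (rule ext) (simp add: tup_def split: sum.split)

lemma range_comp_image: "range (\<sigma> \<circ> x) = \<sigma> ` range x"
  by (simp add: image_comp)

lemma conj_small_range:
  assumes "monster_setting Aut acl small" and "conj Aut C x y" and "small (range x)"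
  shows "small (range y)"
proof -
  obtain \<sigma> where "\<sigma> \<in> Aut" "\<sigma> \<circ> x = y"
    using assms(2) unfolding conj_def by blast
  then show ?thesis
    using monster_setting_small_image[OF assms(1) _ assms(3)] range_comp_image by metis
qed

lemma conj_closed_tuple:
  assumes "monster_setting Aut acl small" and "conj Aut C x y" and "closed_tuple acl x"
  shows "closed_tuple acl y"
proof -
  obtain \<sigma> where "\<sigma> \<in> Aut" "\<sigma> \<circ> x = y"
    using assms(2) unfolding conj_def by blast
  then show ?thesis
    using monster_setting_acl_image[OF assms(1)] assms(3) range_comp_image[of \<sigma> x]
    unfolding closed_tuple_def closed_def by simp
qed

lemma invariance_conj:
  assumes "invariance Aut ind" and "\<sigma> \<in> Aut" and "fixes_pw \<sigma> C"
    and "ind (range x) C (range y)"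
  shows "ind (range (\<sigma> \<circ> x)) C (range (\<sigma> \<circ> y))"
proof -
  have "ind (\<sigma> ` range x) (\<sigma> ` C) (\<sigma> ` range y)"
    using assms(1,2,4) unfolding invariance_def by blast
  then show ?thesis
    unfolding range_comp_image fixes_pw_image_eq[OF assms(3)] .
qed

lemma indiscernible_conj_0:
  assumes "indiscernible Aut C bs"
  shows "conj Aut C (bs 0) (bs k)"
proof -
  have "strict_mono_on {..<1} (\<lambda>_::nat. 0::nat)" "strict_mono_on {..<1} (\<lambda>_::nat. k)"
    by (auto simp: strict_mono_on_def)
  then obtain \<sigma> where "\<sigma> \<in> Aut" "fixes_pw \<sigma> C" "\<forall>i<1::nat. \<sigma> \<circ> bs 0 = bs k"
    using assms unfolding indiscernible_def by blast
  then show ?thesis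
    unfolding conj_def by auto
qed

lemma indiscernible_small_UN:
  assumes "monster_setting Aut acl small" and "indiscernible Aut C bs"
    and "small (range (bs 0))"
  shows "small (\<Union>n. range (bs n))"
proof (rule monster_setting_small_UN[OF assms(1)])
  fix n
  show "small (range (bs n))"
    using conj_small_range[OF assms(1) indiscernible_conj_0[OF assms(2)] assms(3)] .
qed

lemma stationarityD:
  assumes "stationarity Aut acl small ind TYPE('i) TYPE('j)"
    and "small C" and "closed acl C"
    and "small (range a)" and "small (range a')" and "small (range b)"
    and "closed_tuple acl a" and "closed_tuple acl a'" and "closed_tuple acl b"
    and "C \<subseteq> range a \<inter> range b"
    and "ind (range a) C (range b)" and "ind (range a') C (range b)"
    and "conj Aut C a' a"
  shows "conj Aut C (tup (a :: 'i \<Rightarrow> 'm) (b :: 'j \<Rightarrow> 'm)) (tup a' b)"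
  using assms unfolding stationarity_def by simp

lemma stationarity_conj_tup:
  assumes ms: "monster_setting Aut acl small"
    and inv: "invariance Aut ind"
    and st: "stationarity Aut acl small ind TYPE('i) TYPE('j)"
    and C: "small C" "closed acl C"
    and a: "small (range a)" "closed_tuple acl a"
    and b: "small (range b)" "closed_tuple acl b"
    and "C \<subseteq> range a \<inter> range b"
    and "ind (range a) C (range b)"
    and aa': "conj Aut C a a'" and bb': "conj Aut C b b'"
    and a'b': "ind (range a') C (range b')"
  shows "conj Aut C (tup a' b') (tup (a :: 'i \<Rightarrow> 'm) (b :: 'j \<Rightarrow> 'm))"
proof -
  obtain \<rho> where \<rho>: "\<rho> \<in> Aut" "fixes_pw \<rho> C" "\<rho> \<circ> b' = b"
    using conj_sym[OF ms bb'] unfolding conj_def by blast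
  define a'' where "a'' = \<rho> \<circ> a'"
  have "conj Aut C a' a''"
    unfolding conj_def a''_def using \<rho> by blast
  then have "conj Aut C a a''"
    by (rule conj_trans[OF ms aa'])
  then have "small (range a'')" "closed_tuple acl a''" "conj Aut C a'' a"
    using conj_small_range[OF ms _ a(1)] conj_closed_tuple[OF ms _ a(2)] conj_sym[OF ms]
    by blast+
  moreover have "ind (range a'') C (range b)"
    using invariance_conj[OF inv \<rho>(1,2) a'b'] \<rho>(3) unfolding a''_def by simp
  ultimately have "conj Aut C (tup a b) (tup a'' b)"
    using stationarityD[OF st C a(1) _ b(1) a(2) _ b(2)] assms(10,11) by blast
  moreover have "conj Aut C (tup a' b') (tup a'' b)"
    unfolding conj_def comp_tup a''_def using \<rho> by blast
  ultimately show ?thesis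
    using conj_sym[OF ms] conj_trans[OF ms] by blast
qed

theorem lemma7p15:
  fixes Aut :: "('m \<Rightarrow> 'm) set"
    and acl :: "'m set \<Rightarrow> 'm set"
    and small :: "'m set \<Rightarrow> bool"
    and ind :: "'m set \<Rightarrow> 'm set \<Rightarrow> 'm set \<Rightarrow> bool"
    and a :: "'i \<Rightarrow> 'm" and b :: "'j \<Rightarrow> 'm" and C :: "'m set"
  assumes "monster_setting Aut acl small"
    and "invariance Aut ind"
    and "monotonicity ind"
    and "full_existence Aut acl small ind TYPE('i)"
    and "stationarity Aut acl small ind TYPE('i) TYPE('j)"
    and "small (range a)" and "small (range b)" and "small C"
    and "closed_tuple acl a" and "closed_tuple acl b" and "closed acl C"
    and "C \<subseteq> range a \<inter> range b"
    and "ind (range a) C (range b)"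
  shows "dind Aut C a b"
  unfolding dind_def
proof (intro allI impI)
  fix bs :: "nat \<Rightarrow> 'j \<Rightarrow> 'm"
  assume bs: "indiscernible Aut C bs" and "bs 0 = b"
  have "small (\<Union>n. range (bs n))"
    using indiscernible_small_UN[OF assms(1) bs] \<open>bs 0 = b\<close> assms(7) by simp
  then obtain a' where aa': "conj Aut C a a'" and a'bs: "ind (range a') C (\<Union>n. range (bs n))"
    using assms(4,6,8,11) unfolding full_existence_def by blast
  have "conj Aut C (tup a' (bs k)) (tup a b)" for k
  proof (rule stationarity_conj_tup[OF assms(1,2,5,8,11,6,9,7,10,12,13) aa'])
    show "conj Aut C b (bs k)"
      using indiscernible_conj_0[OF bs] \<open>bs 0 = b\<close> by blast
    show "ind (range a') C (range (bs k))"
      using assms(3) a'bs unfolding monotonicity_def by blast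
  qed
  then show "\<exists>a'. \<forall>k. conj Aut C (tup a' (bs k)) (tup a b)"
    by blast
qed

end
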